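(* Let $(Q,\mathcal{K})$ be a partial knowledge structure with $|Q|\ge 2$, let $Q'$ be a proper non-empty subset of $Q$, and suppose $\mathcal{K}$ is $\cup$-closed. Then: (i) $K\sim\bigcup[K]$ for every $K\in\mathcal{K}$; (ii) $\mathcal{K}_{|Q'}$ is $\cup$-closed; if $\mathcal{K}$ is a knowledge space, so is $\mathcal{K}_{|Q'}$; (iii) every $Q'$-child of $\mathcal{K}$ is $\cup$-closed. Moreover the converse implications in (ii) and (iii) do not hold in general: there exist a knowledge structure $\mathcal{K}$ which is not $\cup$-closed and a subset $Q'$ such that $\mathcal{K}_{|Q'}$ and all $Q'$-children of $\mathcal{K}$ are $\cup$-closed.
   Context: All sets are finite. A partial knowledge structure is a family $\mathcal{F}$ of subsets of a set $Q$ with $Q=\bigcup\mathcal{F}\in\mathcal{F}$. A knowledge structure is a pair $(Q,\mathcal{K})$ with $Q$ non-empty, $\mathcal{K}$ a family of subsets of $Q$ containing $\varnothing$ and $Q=\bigcup\mathcal{K}$; it is a knowledge space if it is closed under union. A family is $\cup$-closed if the union of any non-empty subfamily belongs to it. For $Q'\subset Q$, $K\sim L$ iff $K\cap Q'=L\cap Q'$ ($K,L\in\mathcal{K}$); $[K]$ denotes the equivalence class of $K$. The projection is $\mathcal{K}_{|Q'}=\{K\cap Q':K\in\mathcal{K}\}$. For $K\in\mathcal{K}$, the $Q'$-child of $\mathcal{K}$ is $\mathcal{K}_{[K]}=\{L\setminus\bigcap[K] : L\in\mathcal{K},\ L\sim K\}$. *)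

theory Defs
  imports Main
begin

definition partial_knowledge_structure :: "'a set \<Rightarrow> 'a set set \<Rightarrow> bool" where
  "partial_knowledge_structure Q F \<longleftrightarrow> finite Q \<and> F \<subseteq> Pow Q \<and> \<Union>F = Q \<and> Q \<in> F"

definition knowledge_structure :: "'a set \<Rightarrow> 'a set set \<Rightarrow> bool" where
  "knowledge_structure Q K \<longleftrightarrow> finite Q \<and> Q \<noteq> {} \<and> K \<subseteq> Pow Q \<and> {} \<in> K \<and> Q \<in> K \<and> \<Union>K = Q"

definition union_closed :: "'a set set \<Rightarrow> bool" where
  "union_closed F \<longleftrightarrow> (\<forall>G. G \<subseteq> F \<and> G \<noteq> {} \<longrightarrow> \<Union>G \<in> F)"

definition knowledge_space :: "'a set \<Rightarrow> 'a set set \<Rightarrow> bool" where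
  "knowledge_space Q K \<longleftrightarrow> knowledge_structure Q K \<and> union_closed K"

text \<open>Equivalence class [X] of X w.r.t. Q' (K ~ L iff K \<inter> Q' = L \<inter> Q').\<close>
definition eq_class :: "'a set set \<Rightarrow> 'a set \<Rightarrow> 'a set \<Rightarrow> 'a set set" where
  "eq_class K Q' X = {L \<in> K. L \<inter> Q' = X \<inter> Q'}"

definition projection :: "'a set set \<Rightarrow> 'a set \<Rightarrow> 'a set set" where
  "projection K Q' = (\<lambda>L. L \<inter> Q') ` K"

definition child :: "'a set set \<Rightarrow> 'a set \<Rightarrow> 'a set \<Rightarrow> 'a set set" where
  "child K Q' X = (\<lambda>L. L - \<Inter>(eq_class K Q' X)) ` eq_class K Q' X"

end

theory Submission
  imports Defs
begin

text \<open>Both the projection \<open>L \<mapsto> L \<inter> Q'\<close> and the child map \<open>L \<mapsto> L - \<Inter>[X]\<close> commute with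
  unions, and the equivalence classes of a \<open>\<union>\<close>-closed family are themselves \<open>\<union>\<close>-closed; so
  every image in question is the image of a \<open>\<union>\<close>-closed family under a union-preserving map.
  For the converse, \<open>{\<emptyset>, {1}, {2}, {1,2,3}}\<close> with \<open>Q' = {1}\<close> is not \<open>\<union>\<close>-closed although its
  projection and both children consist of \<open>\<emptyset>\<close> and one further set.\<close>

lemma union_closedI_finite:
  assumes "finite F" and "\<And>A B. A \<in> F \<Longrightarrow> B \<in> F \<Longrightarrow> A \<union> B \<in> F"
  shows "union_closed F"
  unfolding union_closed_def
proof (intro allI impI, elim conjE)
  fix G assume "G \<subseteq> F" "G \<noteq> {}"
  have "finite G" using \<open>G \<subseteq> F\<close> assms(1) finite_subset by blast
  from this \<open>G \<noteq> {}\<close> \<open>G \<subseteq> F\<close> show "\<Union>G \<in> F"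
    by (induction G rule: finite_ne_induct) (auto intro: assms(2))
qed

lemma union_closed_image:
  assumes "union_closed F"
    and "\<And>G. G \<subseteq> F \<Longrightarrow> G \<noteq> {} \<Longrightarrow> h (\<Union>G) = \<Union>(h ` G)"
  shows "union_closed (h ` F)"
  unfolding union_closed_def
proof (intro allI impI, elim conjE)
  fix G assume "G \<subseteq> h ` F" "G \<noteq> {}"
  then obtain G' where G': "G' \<subseteq> F" "G = h ` G'"
    by (auto simp: subset_image_iff)
  with \<open>G \<noteq> {}\<close> have "G' \<noteq> {}" by blast
  with G' assms have "\<Union>G = h (\<Union>G')" "\<Union>G' \<in> F"
    unfolding union_closed_def by auto
  then show "\<Union>G \<in> h ` F" by blast
qed

lemma Int_Union_eq_class:
  assumes "X \<in> K"
  shows "X \<inter> Q' = \<Union>(eq_class K Q' X) \<inter> Q'"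
  using assms unfolding eq_class_def by blast

lemma union_closed_eq_class:
  assumes "union_closed K"
  shows "union_closed (eq_class K Q' X)"
  using assms unfolding union_closed_def eq_class_def by blast

lemma union_closed_projection:
  assumes "union_closed K"
  shows "union_closed (projection K Q')"
  unfolding projection_def by (rule union_closed_image[OF assms]) blast

lemma union_closed_child:
  assumes "union_closed K"
  shows "union_closed (child K Q' X)"
  unfolding child_def
  by (rule union_closed_image[OF union_closed_eq_class[OF assms]]) blast

lemma knowledge_space_projection:
  assumes "knowledge_space Q K" "Q' \<subseteq> Q" "Q' \<noteq> {}"
  shows "knowledge_space Q' (projection K Q')"
proof -
  have "knowledge_structure Q' (projection K Q')"
    using assms unfolding knowledge_space_def knowledge_structure_def projection_def
    by (auto intro: finite_subset)
  with assms(1) show ?thesis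
    unfolding knowledge_space_def by (simp add: union_closed_projection)
qed

lemma union_closed_pair_empty: "union_closed {{}, A}"
  by (rule union_closedI_finite) auto

abbreviation example_structure :: "nat set set" where
  "example_structure \<equiv> {{}, {1}, {2}, {1, 2, 3}}"

lemma not_union_closed_example_structure: "\<not> union_closed example_structure"
proof
  assume "union_closed example_structure"
  then have "\<Union>{{1}, {2}} \<in> example_structure"
    unfolding union_closed_def by (metis empty_not_insert insert_subset subset_insertI)
  then show False by auto
qed

lemma union_closed_projection_example_structure:
  "union_closed (projection example_structure {1})"
proof -
  have "projection example_structure {1} = {{}, {1}}"
    by (auto simp: projection_def)
  then show ?thesis by (simp add: union_closed_pair_empty)
qed

lemma Collect_mem_insert:
  "{x \<in> insert a A. P x} = (if P a then insert a {x \<in> A. P x} else {x \<in> A. P x})"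
  by auto

lemma eq_class_example_structure:
  assumes "X \<in> example_structure"
  shows "eq_class example_structure {1} X = (if 1 \<in> X then {{1}, {1, 2, 3}} else {{}, {2}})"
  using assms unfolding eq_class_def by (auto simp only: Collect_mem_insert) simp_all

lemma child_example_structure:
  assumes "X \<in> example_structure"
  shows "child example_structure {1} X = (if 1 \<in> X then {{}, {2, 3}} else {{}, {2}})"
proof -
  have "\<Inter>{{1}, {1, 2, 3 :: nat}} = {1}" "(\<lambda>L. L - {1}) ` {{1}, {1, 2, 3 :: nat}} = {{}, {2, 3}}"
    by auto
  then show ?thesis unfolding child_def eq_class_example_structure[OF assms] by simp
qed

lemma union_closed_child_example_structure:
  assumes "X \<in> example_structure"
  shows "union_closed (child example_structure {1} X)"
  unfolding child_example_structure[OF assms] by (simp add: union_closed_pair_empty)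

lemma union_closed_converses_fail:
  "\<exists>(Q::nat set) K Q'.
     knowledge_structure Q K \<and> card Q \<ge> 2 \<and> Q' \<subset> Q \<and> Q' \<noteq> {} \<and>
     \<not> union_closed K \<and> union_closed (projection K Q') \<and>
     (\<forall>X\<in>K. union_closed (child K Q' X))"
proof -
  have "knowledge_structure {1, 2, 3} example_structure"
    by (auto simp: knowledge_structure_def)
  moreover have "card {1, 2, 3 :: nat} \<ge> 2" "{1} \<subset> {1, 2, 3 :: nat}" by auto
  ultimately show ?thesis
    using not_union_closed_example_structure union_closed_projection_example_structure
      union_closed_child_example_structure by blast
qed

theorem lemma3:
  shows "(\<forall>(Q::'a set) K Q'.
            partial_knowledge_structure Q K \<and> card Q \<ge> 2 \<and> Q' \<subset> Q \<and> Q' \<noteq> {} \<and> union_closed K \<longrightarrow>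
              (\<forall>X\<in>K. X \<inter> Q' = \<Union>(eq_class K Q' X) \<inter> Q')
            \<and> union_closed (projection K Q')
            \<and> (knowledge_space Q K \<longrightarrow> knowledge_space Q' (projection K Q'))
            \<and> (\<forall>X\<in>K. union_closed (child K Q' X)))
       \<and> (\<exists>(Q::nat set) K Q'.
            knowledge_structure Q K \<and> card Q \<ge> 2 \<and> Q' \<subset> Q \<and> Q' \<noteq> {} \<and>
            \<not> union_closed K \<and> union_closed (projection K Q') \<and>
            (\<forall>X\<in>K. union_closed (child K Q' X)))"
  using Int_Union_eq_class union_closed_projection union_closed_child
    knowledge_space_projection union_closed_converses_fail
  by (metis psubset_imp_subset)

end
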